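(* Assume $\rho_\alpha^{\mathrm{dir}}<1$, let $\theta^\star$ be the unique projected Bellman fixed point, and let $x_k:=\theta_k-\theta^\star$. Fix $\varepsilon>0$ with $\beta_\varepsilon:=\rho_\alpha^{\mathrm{dir}}+\varepsilon<1$, and let $p_\varepsilon$ and $C_\varepsilon$ be as described in the context. Then for every $k\ge0$, \[ \begin{aligned} \mathbb E[p_\varepsilon(b_k+\xi_{k+1})\mid\mathcal F_k]\le{}&2\sqrt{C_\varepsilon}\,\phi_{\max}\big(R_{\max}+(1+\gamma)\|\Phi\theta^\star\|_\infty\big)\\ &+2\sqrt{C_\varepsilon}\,\phi_{\max}\|R+\gamma PV_{\theta^\star}-\Phi\theta^\star\|_\infty\\ &+4\sqrt{C_\varepsilon}(1+\gamma)\phi_{\max}^2\,p_\varepsilon(x_k). \end{aligned} \]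
   Context: Consider a finite discounted MDP with state space $\mathcal S=\{1,\dots,|\mathcal S|\}$, action space $\mathcal A=\{1,\dots,|\mathcal A|\}$, transition probabilities $P(s'\mid s,a)$, real rewards $r(s,a,s')$, expected reward $R(s,a)=\sum_{s'}P(s'\mid s,a)r(s,a,s')$, and discount factor $\gamma\in(0,1)$. Let $R_{\max}:=\max|r(s,a,s')|$. State-action vectors are ordered as $(1,1),(2,1),\dots,(|\mathcal S|,1),(1,2),\dots$, and $e_i$ is the coordinate vector of pair $i$. The matrix $P$ has rows $P(\cdot\mid s,a)$, and $R$ has entries $R(s,a)$. The set $\Theta$ is the set of deterministic stationary policies. For $\pi\in\Theta$, $\Pi^\pi$ has entry $1$ at row $s$, column $(s,\pi(s))$, and zeros elsewhere. The feature matrix $\Phi$ has full column rank and rows $\phi(s,a)^\top$. Let $\phi_{\max}:=\max\|\phi(s,a)\|_2$, and define $V_\theta(s)=\max_a\phi(s,a)^\top\theta$. The step size is $\alpha\in(0,1)$. Markovian observations: fix a behavior policy $b(a\mid s)$. The trajectory evolves as $s_{k+1}\sim P(\cdot\mid s_k,a_k)$, $r_{k+1}=r(s_k,a_k,s_{k+1})$, $a_{k+1}\sim b(\cdot\mid s_{k+1})$, with $X_k=(s_k,a_k)$. The chain has a stationary distribution $d>0$, and $D=\mathrm{diag}(d)$. The filtration is $\mathcal F_k=\sigma(\theta_0,X_0,r_1,X_1,\dots,r_k,X_k)$, and $\theta_0$ is deterministic. The update is $\theta_{k+1}=\theta_k+\alpha\phi(X_k)\big(r_{k+1}+\gamma\max_u\phi(s_{k+1},u)^\top\theta_k-\phi(X_k)^\top\theta_k\big)$.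 Define $\delta(\theta):=R+\gamma PV_\theta-\Phi\theta$, \[ \xi_{k+1}:=\phi(X_k)\big(r_{k+1}+\gamma\max_u\phi(s_{k+1},u)^\top\theta_k-\phi(X_k)^\top\theta_k-e_{X_k}^\top\delta(\theta_k)\big), \] and $b_k:=\Phi^\top(e_{X_k}e_{X_k}^\top-D)\delta(\theta_k)$. A projected Bellman fixed point is a $\theta^\star$ with $\Phi^\top D\delta(\theta^\star)=0$. Define $A_\pi:=I-\alpha\Phi^\top D\Phi+\alpha\gamma\Phi^\top DP\Pi^\pi\Phi$, and let $\rho_\alpha^{\mathrm{dir}}:=\lim_k\max_{\pi_i\in\Theta}\|A_{\pi_k}\cdots A_{\pi_1}\|^{1/k}$. When $\rho_\alpha^{\mathrm{dir}}<1$, a unique projected Bellman fixed point exists. Lyapunov norm: define \[ V_\varepsilon^\infty(x):=\lim_{t\to\infty}\sum_{\ell=0}^t\beta_\varepsilon^{-2\ell}\max_{\pi_1,\dots,\pi_\ell\in\Theta}\|A_{\pi_\ell}\cdots A_{\pi_1}x\|_2^2, \] where the $\ell=0$ term is $\|x\|_2^2$, and $p_\varepsilon:=\sqrt{V_\varepsilon^\infty}$ (a norm). Let $C_\varepsilon\ge1$ satisfy $\|x\|_2^2\le V_\varepsilon^\infty(x)\le C_\varepsilon\|x\|_2^2$ for all $x$. *)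

theory Defs
  imports "HOL-Probability.Probability"
begin

text \<open>State-action pairs are the finite type 's \<times> 'a; features live in real^'n.
  A matrix real^'c^'r has rows indexed by 'r.\<close>

definition Pmat :: "('s::finite \<Rightarrow> 'a::finite \<Rightarrow> 's \<Rightarrow> real) \<Rightarrow> real^'s^('s \<times> 'a)" where
  "Pmat P = (\<chi> sa s'. P (fst sa) (snd sa) s')"

definition Rvec :: "('s::finite \<Rightarrow> 'a::finite \<Rightarrow> 's \<Rightarrow> real) \<Rightarrow> ('s \<Rightarrow> 'a \<Rightarrow> 's \<Rightarrow> real) \<Rightarrow> real^('s \<times> 'a)" where
  "Rvec P r = (\<chi> sa. \<Sum>s'\<in>UNIV. P (fst sa) (snd sa) s' * r (fst sa) (snd sa) s')"

definition Rmax :: "('s::finite \<Rightarrow> 'a::finite \<Rightarrow> 's \<Rightarrow> real) \<Rightarrow> real" where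
  "Rmax r = Max {\<bar>r s a s'\<bar> | s a s'. True}"

definition phimax :: "real^'n::finite^('s::finite \<times> 'a::finite) \<Rightarrow> real" where
  "phimax Phi = Max (range (\<lambda>sa. norm (Phi $ sa)))"

definition Dmat :: "('i::finite \<Rightarrow> real) \<Rightarrow> real^'i^'i" where
  "Dmat d = (\<chi> i j. if i = j then d i else 0)"

definition Pi_mat :: "('s::finite \<Rightarrow> 'a::finite) \<Rightarrow> real^('s \<times> 'a)^'s" where
  "Pi_mat \<pi> = (\<chi> s sa. if sa = (s, \<pi> s) then 1 else 0)"

definition outer :: "real^'i::finite \<Rightarrow> real^'j::finite \<Rightarrow> real^'j^'i" where
  "outer u v = (\<chi> i j. u $ i * v $ j)"

definition Vfun :: "real^'n::finite^('s::finite \<times> 'a::finite) \<Rightarrow> real^'n \<Rightarrow> real^'s" where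
  "Vfun Phi \<theta> = (\<chi> s. Max (range (\<lambda>a. Phi $ (s, a) \<bullet> \<theta>)))"

definition delta :: "('s::finite \<Rightarrow> 'a::finite \<Rightarrow> 's \<Rightarrow> real) \<Rightarrow> ('s \<Rightarrow> 'a \<Rightarrow> 's \<Rightarrow> real) \<Rightarrow> real
     \<Rightarrow> real^'n::finite^('s \<times> 'a) \<Rightarrow> real^'n \<Rightarrow> real^('s \<times> 'a)" where
  "delta P r \<gamma> Phi \<theta> = Rvec P r + \<gamma> *\<^sub>R (Pmat P *v Vfun Phi \<theta>) - Phi *v \<theta>"

definition Amat :: "('s::finite \<Rightarrow> 'a::finite \<Rightarrow> 's \<Rightarrow> real) \<Rightarrow> ('s \<times> 'a \<Rightarrow> real) \<Rightarrow> real \<Rightarrow> real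
     \<Rightarrow> real^'n::finite^('s \<times> 'a) \<Rightarrow> ('s \<Rightarrow> 'a) \<Rightarrow> real^'n^'n" where
  "Amat P d \<gamma> \<alpha> Phi \<pi> = mat 1 - \<alpha> *\<^sub>R (transpose Phi ** Dmat d ** Phi)
      + (\<alpha> * \<gamma>) *\<^sub>R (transpose Phi ** Dmat d ** Pmat P ** Pi_mat \<pi> ** Phi)"

text \<open>For the list [pi_1, ..., pi_k] this is A_{pi_k} ... A_{pi_1}.\<close>
definition Aprod :: "('s::finite \<Rightarrow> 'a::finite \<Rightarrow> 's \<Rightarrow> real) \<Rightarrow> ('s \<times> 'a \<Rightarrow> real) \<Rightarrow> real \<Rightarrow> real
     \<Rightarrow> real^'n::finite^('s \<times> 'a) \<Rightarrow> ('s \<Rightarrow> 'a) list \<Rightarrow> real^'n^'n" where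
  "Aprod P d \<gamma> \<alpha> Phi ps = foldl (\<lambda>A \<pi>. Amat P d \<gamma> \<alpha> Phi \<pi> ** A) (mat 1) ps"

definition rho_dir :: "('s::finite \<Rightarrow> 'a::finite \<Rightarrow> 's \<Rightarrow> real) \<Rightarrow> ('s \<times> 'a \<Rightarrow> real) \<Rightarrow> real \<Rightarrow> real
     \<Rightarrow> real^'n::finite^('s \<times> 'a) \<Rightarrow> real" where
  "rho_dir P d \<gamma> \<alpha> Phi = lim (\<lambda>k.
     (Max ((\<lambda>ps. onorm (\<lambda>x. Aprod P d \<gamma> \<alpha> Phi ps *v x)) ` {ps. length ps = k})) powr (1 / real k))"

definition Vinf :: "('s::finite \<Rightarrow> 'a::finite \<Rightarrow> 's \<Rightarrow> real) \<Rightarrow> ('s \<times> 'a \<Rightarrow> real) \<Rightarrow> real \<Rightarrow> real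
     \<Rightarrow> real^'n::finite^('s \<times> 'a) \<Rightarrow> real \<Rightarrow> real^'n \<Rightarrow> real" where
  "Vinf P d \<gamma> \<alpha> Phi \<beta> x = lim (\<lambda>t. \<Sum>l\<le>t. inverse \<beta> ^ (2 * l) *
     Max ((\<lambda>ps. (norm (Aprod P d \<gamma> \<alpha> Phi ps *v x))\<^sup>2) ` {ps. length ps = l}))"

definition peps :: "('s::finite \<Rightarrow> 'a::finite \<Rightarrow> 's \<Rightarrow> real) \<Rightarrow> ('s \<times> 'a \<Rightarrow> real) \<Rightarrow> real \<Rightarrow> real
     \<Rightarrow> real^'n::finite^('s \<times> 'a) \<Rightarrow> real \<Rightarrow> real^'n \<Rightarrow> real" where
  "peps P d \<gamma> \<alpha> Phi \<beta> x = sqrt (Vinf P d \<gamma> \<alpha> Phi \<beta> x)"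

fun qtheta :: "('s::finite \<Rightarrow> 'a::finite \<Rightarrow> 's \<Rightarrow> real) \<Rightarrow> real \<Rightarrow> real \<Rightarrow> real^'n::finite^('s \<times> 'a)
     \<Rightarrow> real^'n \<Rightarrow> (nat \<Rightarrow> 'w \<Rightarrow> 's) \<Rightarrow> (nat \<Rightarrow> 'w \<Rightarrow> 'a) \<Rightarrow> nat \<Rightarrow> 'w \<Rightarrow> real^'n" where
  "qtheta r \<gamma> \<alpha> Phi \<theta>0 s act 0 \<omega> = \<theta>0"
| "qtheta r \<gamma> \<alpha> Phi \<theta>0 s act (Suc k) \<omega> =
     (let \<theta> = qtheta r \<gamma> \<alpha> Phi \<theta>0 s act k \<omega>; x = (s k \<omega>, act k \<omega>) in
      \<theta> + (\<alpha> * (r (s k \<omega>) (act k \<omega>) (s (Suc k) \<omega>)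
                + \<gamma> * Max (range (\<lambda>u. Phi $ (s (Suc k) \<omega>, u) \<bullet> \<theta>)) - Phi $ x \<bullet> \<theta>)) *\<^sub>R Phi $ x)"

definition bvec :: "('s::finite \<Rightarrow> 'a::finite \<Rightarrow> 's \<Rightarrow> real) \<Rightarrow> ('s \<Rightarrow> 'a \<Rightarrow> 's \<Rightarrow> real) \<Rightarrow> real
     \<Rightarrow> real^'n::finite^('s \<times> 'a) \<Rightarrow> ('s \<times> 'a \<Rightarrow> real) \<Rightarrow> real^'n \<Rightarrow> 's \<times> 'a \<Rightarrow> real^'n" where
  "bvec P r \<gamma> Phi d \<theta> x =
     transpose Phi *v ((outer (axis x 1) (axis x 1) - Dmat d) *v delta P r \<gamma> Phi \<theta>)"

definition xivec :: "('s::finite \<Rightarrow> 'a::finite \<Rightarrow> 's \<Rightarrow> real) \<Rightarrow> ('s \<Rightarrow> 'a \<Rightarrow> 's \<Rightarrow> real) \<Rightarrow> real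
     \<Rightarrow> real^'n::finite^('s \<times> 'a) \<Rightarrow> real^'n \<Rightarrow> 's \<times> 'a \<Rightarrow> 's \<Rightarrow> real^'n" where
  "xivec P r \<gamma> Phi \<theta> x s' =
     (r (fst x) (snd x) s' + \<gamma> * Max (range (\<lambda>u. Phi $ (s', u) \<bullet> \<theta>)) - Phi $ x \<bullet> \<theta>
       - axis x 1 \<bullet> delta P r \<gamma> Phi \<theta>) *\<^sub>R Phi $ x"

text \<open>History X_0..X_k and the filtration F_k generated by it (rewards are functions of it).\<close>
definition hist :: "(nat \<Rightarrow> 'w \<Rightarrow> 's) \<Rightarrow> (nat \<Rightarrow> 'w \<Rightarrow> 'a) \<Rightarrow> nat \<Rightarrow> 'w \<Rightarrow> ('s \<times> 'a) list" where
  "hist s act k \<omega> = map (\<lambda>i. (s i \<omega>, act i \<omega>)) [0..<Suc k]"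

definition Filt :: "'w measure \<Rightarrow> (nat \<Rightarrow> 'w \<Rightarrow> 's) \<Rightarrow> (nat \<Rightarrow> 'w \<Rightarrow> 'a) \<Rightarrow> nat \<Rightarrow> 'w measure" where
  "Filt M s act k = vimage_algebra (space M) (hist s act k) (count_space UNIV)"

end

theory Submission
  imports Defs
begin

(* The bound holds for every sample path. With the TD error
   e = r + \<gamma> V\<^sub>\<theta>(s') - \<phi>(X)\<^sup>T \<theta> one has
   b\<^sub>k + \<xi>\<^sub>k\<^sub>+\<^sub>1 = e \<phi>(X\<^sub>k) - \<Phi>\<^sup>T D \<delta>(\<theta>\<^sub>k), and the fixed-point equation turns the
   second term into \<Phi>\<^sup>T D (\<delta>(\<theta>\<^sub>k) - \<delta>(\<theta>\<^sup>\<star>)), which is Lipschitz in x\<^sub>k because a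
   maximum is 1-Lipschitz in the sup norm and P is stochastic. Bounding e the same way
   around \<theta>\<^sup>\<star> and sandwiching p\<^sub>\<epsilon> between the Euclidean norm and \<surd>C\<^sub>\<epsilon> times it
   gives the inequality pointwise. Its right-hand side depends only on X\<^sub>0, ..., X\<^sub>k, so
   monotonicity of conditional expectation concludes. *)

lemma abs_Max_range_diff_le:
  fixes f g :: "'u::finite \<Rightarrow> real"
  assumes "\<And>u. \<bar>f u - g u\<bar> \<le> c"
  shows "\<bar>Max (range f) - Max (range g)\<bar> \<le> c"
proof -
  have "Max (range f) \<in> range f" "Max (range g) \<in> range g" by (intro Max_in; simp)+
  then obtain u v where u: "Max (range f) = f u" and v: "Max (range g) = g v" by blast
  have "g u \<le> Max (range g)" "f v \<le> Max (range f)" by simp_all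
  then show ?thesis using assms[of u] assms[of v] u v by (simp add: abs_le_iff)
qed

lemma abs_Max_range_le:
  fixes g :: "'u::finite \<Rightarrow> real"
  assumes "\<And>u. \<bar>g u\<bar> \<le> c"
  shows "\<bar>Max (range g)\<bar> \<le> c"
proof -
  have "Max (range g) \<in> range g" by (intro Max_in) simp_all
  then obtain u where "Max (range g) = g u" by blast
  then show ?thesis using assms by simp
qed

lemma abs_convex_comb_le:
  fixes u :: "real^'j::finite"
  assumes "\<And>j. 0 \<le> p j" "(\<Sum>j\<in>UNIV. p j) = 1" "\<And>j. \<bar>u $ j\<bar> \<le> c"
  shows "\<bar>\<Sum>j\<in>UNIV. p j * u $ j\<bar> \<le> c"
proof -
  have "\<bar>\<Sum>j\<in>UNIV. p j * u $ j\<bar> \<le> (\<Sum>j\<in>UNIV. p j * c)"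
    using assms(1,3) by (intro order_trans[OF sum_abs] sum_mono) (simp add: abs_mult mult_left_mono)
  also have "\<dots> = c" using assms(2) by (simp add: sum_distrib_right[symmetric])
  finally show ?thesis .
qed

lemma norm_row_le_phimax: "norm (Phi $ i) \<le> phimax Phi"
  unfolding phimax_def by (rule Max_ge) auto

lemma phimax_nonneg: "0 \<le> phimax Phi"
  using norm_row_le_phimax[of Phi] norm_ge_zero order_trans by blast

lemma abs_le_Rmax:
  fixes r :: "'s::finite \<Rightarrow> 'a::finite \<Rightarrow> 's \<Rightarrow> real"
  shows "\<bar>r s a s'\<bar> \<le> Rmax r"
proof -
  have "{\<bar>r s a s'\<bar> | s a s'. True} \<subseteq> range (\<lambda>(s, a, s'). \<bar>r s a s'\<bar>)"
    by (auto intro: rev_image_eqI[of "(s, a, s')" for s a s'])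
  then have "finite {\<bar>r s a s'\<bar> | s a s'. True}" by (rule finite_subset) simp
  then show ?thesis unfolding Rmax_def by (rule Max_ge) blast
qed

lemma Rmax_nonneg: "0 \<le> Rmax (r :: 's::finite \<Rightarrow> 'a::finite \<Rightarrow> 's \<Rightarrow> real)"
  using abs_le_Rmax[of r] abs_ge_zero order_trans by blast

lemma abs_inner_row_le_phimax:
  fixes Phi :: "real^'n::finite^('s::finite \<times> 'a::finite)"
  shows "\<bar>Phi $ i \<bullet> x\<bar> \<le> phimax Phi * norm x"
  using Cauchy_Schwarz_ineq2 norm_row_le_phimax
  by (metis mult_right_mono norm_ge_zero order_trans)

lemma abs_inner_row_le_infnorm:
  fixes Phi :: "real^'n::finite^'i::finite"
  shows "\<bar>Phi $ i \<bullet> x\<bar> \<le> infnorm (Phi *v x)"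
  using component_le_infnorm_cart[of "Phi *v x" i] by (simp add: matrix_vector_mul_component)

lemma Max_range_inner_eq_Vfun: "Max (range (\<lambda>u. Phi $ (s', u) \<bullet> \<theta>)) = Vfun Phi \<theta> $ s'"
  by (simp add: Vfun_def)

lemma abs_Vfun_diff_le:
  fixes Phi :: "real^'n::finite^('s::finite \<times> 'a::finite)"
  shows "\<bar>Vfun Phi \<theta> $ s' - Vfun Phi \<theta>' $ s'\<bar> \<le> phimax Phi * norm (\<theta> - \<theta>')"
  unfolding Vfun_def vec_lambda_beta
  by (rule abs_Max_range_diff_le) (metis inner_diff_right abs_inner_row_le_phimax)

lemma abs_Vfun_le:
  fixes Phi :: "real^'n::finite^('s::finite \<times> 'a::finite)"
  shows "\<bar>Vfun Phi \<theta> $ s'\<bar> \<le> infnorm (Phi *v \<theta>') + phimax Phi * norm (\<theta> - \<theta>')"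
proof -
  have "\<bar>Vfun Phi \<theta>' $ s'\<bar> \<le> infnorm (Phi *v \<theta>')"
    unfolding Vfun_def vec_lambda_beta by (rule abs_Max_range_le) (rule abs_inner_row_le_infnorm)
  then show ?thesis using abs_Vfun_diff_le[of Phi \<theta> s' \<theta>'] by linarith
qed

lemma abs_delta_diff_le:
  fixes P :: "'s::finite \<Rightarrow> 'a::finite \<Rightarrow> 's \<Rightarrow> real"
    and Phi :: "real^'n::finite^('s \<times> 'a)"
  assumes P_nonneg: "\<And>x y z. 0 \<le> P x y z"
    and P_sum: "\<And>x y. (\<Sum>z\<in>UNIV. P x y z) = 1"
    and "0 \<le> \<gamma>"
  shows "\<bar>(delta P r \<gamma> Phi \<theta> - delta P r \<gamma> Phi \<theta>') $ i\<bar> \<le> (1 + \<gamma>) * phimax Phi * norm (\<theta> - \<theta>')"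
proof -
  let ?c = "phimax Phi * norm (\<theta> - \<theta>')"
  define EV where "EV = (\<Sum>j\<in>UNIV. P (fst i) (snd i) j * (Vfun Phi \<theta> - Vfun Phi \<theta>') $ j)"
  have "delta P r \<gamma> Phi \<theta> - delta P r \<gamma> Phi \<theta>'
      = \<gamma> *\<^sub>R (Pmat P *v (Vfun Phi \<theta> - Vfun Phi \<theta>')) - Phi *v (\<theta> - \<theta>')"
    unfolding delta_def by (simp add: matrix_vector_mult_diff_distrib scaleR_diff_right)
  moreover have "(Pmat P *v u) $ i = (\<Sum>j\<in>UNIV. P (fst i) (snd i) j * u $ j)" for u
    by (simp add: matrix_vector_mult_def Pmat_def)
  ultimately have eq: "(delta P r \<gamma> Phi \<theta> - delta P r \<gamma> Phi \<theta>') $ i = \<gamma> * EV - Phi $ i \<bullet> (\<theta> - \<theta>')"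
    by (simp add: EV_def matrix_vector_mul_component)
  have "\<bar>\<gamma> * EV\<bar> \<le> \<gamma> * ?c"
  proof -
    have "\<bar>EV\<bar> \<le> ?c"
      unfolding EV_def using P_nonneg P_sum abs_Vfun_diff_le by (intro abs_convex_comb_le) auto
    then show ?thesis using \<open>0 \<le> \<gamma>\<close> by (simp add: abs_mult mult_left_mono)
  qed
  moreover have "\<bar>Phi $ i \<bullet> (\<theta> - \<theta>')\<bar> \<le> ?c" by (rule abs_inner_row_le_phimax)
  moreover have "(1 + \<gamma>) * phimax Phi * norm (\<theta> - \<theta>') = \<gamma> * ?c + ?c"
    by (simp add: algebra_simps)
  ultimately show ?thesis
    unfolding eq using abs_triangle_ineq4[of "\<gamma> * EV" "Phi $ i \<bullet> (\<theta> - \<theta>')"] by linarith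
qed

lemma transpose_mult_vec_eq_sum:
  fixes Phi :: "real^'n::finite^'i::finite"
  shows "transpose Phi *v v = (\<Sum>i\<in>UNIV. v $ i *\<^sub>R Phi $ i)"
  by (simp add: vector_matrix_mult_def vec_eq_iff)

lemma Dmat_mult_vec: "(Dmat d *v w) $ i = d i * w $ i"
proof -
  have "(Dmat d *v w) $ i = (\<Sum>j\<in>UNIV. if i = j then d i * w $ j else 0)"
    unfolding Dmat_def matrix_vector_mult_def vec_lambda_beta by (rule sum.cong) auto
  then show ?thesis by simp
qed

lemma norm_transpose_Dmat_le:
  fixes Phi :: "real^'n::finite^('s::finite \<times> 'a::finite)"
  assumes "\<And>x. 0 \<le> d x" "(\<Sum>x\<in>UNIV. d x) = 1" "\<And>i. \<bar>w $ i\<bar> \<le> c"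
  shows "norm (transpose Phi *v (Dmat d *v w)) \<le> phimax Phi * c"
proof -
  have "norm (transpose Phi *v (Dmat d *v w)) \<le> (\<Sum>i\<in>UNIV. d i * (\<bar>w $ i\<bar> * norm (Phi $ i)))"
    unfolding transpose_mult_vec_eq_sum Dmat_mult_vec using assms(1)
    by (intro order_trans[OF norm_sum] sum_mono) (simp add: abs_mult)
  also have "\<dots> \<le> (\<Sum>i\<in>UNIV. d i * (c * phimax Phi))"
    using assms(1,3) norm_row_le_phimax order_trans[OF abs_ge_zero assms(3)]
    by (intro sum_mono mult_left_mono mult_mono) auto
  also have "\<dots> = phimax Phi * c" using assms(2) by (simp add: sum_distrib_right[symmetric])
  finally show ?thesis .
qed

lemma outer_axis_mult_vec: "outer (axis x 1) (axis x 1) *v v = (v $ x) *\<^sub>R axis x (1::real)"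
proof -
  have "(outer (axis x 1) (axis x 1) *v v) $ i = (\<Sum>j\<in>UNIV. if j = x then (if i = x then v $ x else 0) else 0)" for i
    unfolding outer_def matrix_vector_mult_def vec_lambda_beta by (rule sum.cong) (auto simp: axis_def)
  then show ?thesis by (simp add: vec_eq_iff axis_def)
qed

lemma transpose_mult_scaled_axis:
  fixes Phi :: "real^'n::finite^'i::finite"
  shows "transpose Phi *v (c *\<^sub>R axis x 1) = c *\<^sub>R Phi $ x"
proof -
  have "transpose Phi *v (c *\<^sub>R axis x 1) = (\<Sum>i\<in>UNIV. (if i = x then c *\<^sub>R Phi $ i else 0))"
    unfolding transpose_mult_vec_eq_sum by (rule sum.cong) (auto simp: axis_def)
  then show ?thesis by simp
qed

lemma bvec_plus_xivec:
  "bvec P r \<gamma> Phi d \<theta> x + xivec P r \<gamma> Phi \<theta> x s' =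
   (r (fst x) (snd x) s' + \<gamma> * Vfun Phi \<theta> $ s' - Phi $ x \<bullet> \<theta>) *\<^sub>R Phi $ x
   - transpose Phi *v (Dmat d *v delta P r \<gamma> Phi \<theta>)"
  unfolding bvec_def xivec_def matrix_vector_mult_diff_rdistrib matrix_vector_mult_diff_distrib
    outer_axis_mult_vec transpose_mult_scaled_axis inner_axis' Max_range_inner_eq_Vfun
  by (simp add: algebra_simps)

lemma abs_td_error_le:
  fixes r :: "'s::finite \<Rightarrow> 'a::finite \<Rightarrow> 's \<Rightarrow> real"
    and Phi :: "real^'n::finite^('s \<times> 'a)"
  assumes "0 \<le> \<gamma>"
  shows "\<bar>r (fst x) (snd x) s' + \<gamma> * Vfun Phi \<theta> $ s' - Phi $ x \<bullet> \<theta>\<bar>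
    \<le> Rmax r + (1 + \<gamma>) * (infnorm (Phi *v \<theta>s) + phimax Phi * norm (\<theta> - \<theta>s))"
proof -
  let ?B = "infnorm (Phi *v \<theta>s) + phimax Phi * norm (\<theta> - \<theta>s)"
  have "\<bar>Phi $ x \<bullet> \<theta>\<bar> \<le> ?B"
    using abs_triangle_ineq[of "Phi $ x \<bullet> \<theta>s" "Phi $ x \<bullet> (\<theta> - \<theta>s)"]
      abs_inner_row_le_infnorm[of Phi x \<theta>s] abs_inner_row_le_phimax[of Phi x "\<theta> - \<theta>s"]
    by (simp add: inner_diff_right)
  moreover have "\<bar>\<gamma> * Vfun Phi \<theta> $ s'\<bar> \<le> \<gamma> * ?B"
    using abs_Vfun_le[of Phi \<theta> s' \<theta>s] \<open>0 \<le> \<gamma>\<close> by (simp add: abs_mult mult_left_mono)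
  moreover have "\<bar>r (fst x) (snd x) s'\<bar> \<le> Rmax r" by (rule abs_le_Rmax)
  ultimately show ?thesis
    using abs_triangle_ineq4[of "r (fst x) (snd x) s' + \<gamma> * Vfun Phi \<theta> $ s'" "Phi $ x \<bullet> \<theta>"]
      abs_triangle_ineq[of "r (fst x) (snd x) s'" "\<gamma> * Vfun Phi \<theta> $ s'"]
    by (simp add: distrib_right)
qed

lemma norm_projected_delta_le:
  fixes P :: "'s::finite \<Rightarrow> 'a::finite \<Rightarrow> 's \<Rightarrow> real"
    and Phi :: "real^'n::finite^('s \<times> 'a)"
  assumes P_nonneg: "\<And>x y z. 0 \<le> P x y z"
    and P_sum: "\<And>x y. (\<Sum>z\<in>UNIV. P x y z) = 1"
    and "0 \<le> \<gamma>"
    and d_nonneg: "\<And>x. 0 \<le> d x"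
    and d_sum: "(\<Sum>x\<in>UNIV. d x) = 1"
    and fixpt: "transpose Phi *v (Dmat d *v delta P r \<gamma> Phi \<theta>s) = 0"
  shows "norm (transpose Phi *v (Dmat d *v delta P r \<gamma> Phi \<theta>))
    \<le> (1 + \<gamma>) * (phimax Phi)\<^sup>2 * norm (\<theta> - \<theta>s)"
proof -
  have "transpose Phi *v (Dmat d *v delta P r \<gamma> Phi \<theta>)
      = transpose Phi *v (Dmat d *v (delta P r \<gamma> Phi \<theta> - delta P r \<gamma> Phi \<theta>s))"
    using fixpt by (simp add: matrix_vector_mult_diff_distrib)
  also have "norm \<dots> \<le> phimax Phi * ((1 + \<gamma>) * phimax Phi * norm (\<theta> - \<theta>s))"
    using d_nonneg d_sum abs_delta_diff_le[OF P_nonneg P_sum \<open>0 \<le> \<gamma>\<close>]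
    by (rule norm_transpose_Dmat_le)
  also have "\<dots> = (1 + \<gamma>) * (phimax Phi)\<^sup>2 * norm (\<theta> - \<theta>s)"
    by (simp add: power2_eq_square)
  finally show ?thesis .
qed

lemma norm_bvec_plus_xivec_le:
  fixes P :: "'s::finite \<Rightarrow> 'a::finite \<Rightarrow> 's \<Rightarrow> real"
    and Phi :: "real^'n::finite^('s \<times> 'a)"
  assumes P_nonneg: "\<And>x y z. 0 \<le> P x y z"
    and P_sum: "\<And>x y. (\<Sum>z\<in>UNIV. P x y z) = 1"
    and "0 \<le> \<gamma>"
    and d_nonneg: "\<And>x. 0 \<le> d x"
    and d_sum: "(\<Sum>x\<in>UNIV. d x) = 1"
    and fixpt: "transpose Phi *v (Dmat d *v delta P r \<gamma> Phi \<theta>s) = 0"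
  shows "norm (bvec P r \<gamma> Phi d \<theta> x + xivec P r \<gamma> Phi \<theta> x s')
    \<le> phimax Phi * (Rmax r + (1 + \<gamma>) * infnorm (Phi *v \<theta>s))
      + 2 * (1 + \<gamma>) * (phimax Phi)\<^sup>2 * norm (\<theta> - \<theta>s)"
proof -
  define td where "td = r (fst x) (snd x) s' + \<gamma> * Vfun Phi \<theta> $ s' - Phi $ x \<bullet> \<theta>"
  have "norm (td *\<^sub>R Phi $ x)
      \<le> (Rmax r + (1 + \<gamma>) * (infnorm (Phi *v \<theta>s) + phimax Phi * norm (\<theta> - \<theta>s))) * phimax Phi"
    unfolding td_def using abs_td_error_le[OF \<open>0 \<le> \<gamma>\<close>, of r x s' Phi \<theta> \<theta>s] norm_row_le_phimax[of Phi x]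
    by (simp add: mult_mono)
  then have "norm (bvec P r \<gamma> Phi d \<theta> x + xivec P r \<gamma> Phi \<theta> x s')
      \<le> (Rmax r + (1 + \<gamma>) * (infnorm (Phi *v \<theta>s) + phimax Phi * norm (\<theta> - \<theta>s))) * phimax Phi
        + (1 + \<gamma>) * (phimax Phi)\<^sup>2 * norm (\<theta> - \<theta>s)"
    unfolding bvec_plus_xivec td_def[symmetric]
    using norm_projected_delta_le[OF assms, of \<theta>] norm_triangle_ineq4 add_mono order_trans by blast
  also have "\<dots> = phimax Phi * (Rmax r + (1 + \<gamma>) * infnorm (Phi *v \<theta>s))
      + 2 * (1 + \<gamma>) * (phimax Phi)\<^sup>2 * norm (\<theta> - \<theta>s)"
    by (simp add: algebra_simps power2_eq_square)
  finally show ?thesis .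
qed

lemma norm_le_peps: "(norm x)\<^sup>2 \<le> Vinf P d \<gamma> \<alpha> Phi \<beta> x \<Longrightarrow> norm x \<le> peps P d \<gamma> \<alpha> Phi \<beta> x"
  unfolding peps_def by (rule real_le_rsqrt)

lemma peps_le_sqrt_norm:
  assumes "Vinf P d \<gamma> \<alpha> Phi \<beta> x \<le> C * (norm x)\<^sup>2"
  shows "peps P d \<gamma> \<alpha> Phi \<beta> x \<le> sqrt C * norm x"
proof -
  have "peps P d \<gamma> \<alpha> Phi \<beta> x \<le> sqrt (C * (norm x)\<^sup>2)"
    unfolding peps_def using assms by (rule real_sqrt_le_mono)
  then show ?thesis by (simp add: real_sqrt_mult)
qed

lemma equivalent_norm_bvec_plus_xivec_le:
  fixes P :: "'s::finite \<Rightarrow> 'a::finite \<Rightarrow> 's \<Rightarrow> real"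
    and Phi :: "real^'n::finite^('s \<times> 'a)"
    and p :: "real^'n \<Rightarrow> real"
  assumes P_nonneg: "\<And>x y z. 0 \<le> P x y z"
    and P_sum: "\<And>x y. (\<Sum>z\<in>UNIV. P x y z) = 1"
    and "0 \<le> \<gamma>"
    and d_nonneg: "\<And>x. 0 \<le> d x"
    and d_sum: "(\<Sum>x\<in>UNIV. d x) = 1"
    and fixpt: "transpose Phi *v (Dmat d *v delta P r \<gamma> Phi \<theta>s) = 0"
    and "0 \<le> C"
    and p_upper: "p (bvec P r \<gamma> Phi d \<theta> x + xivec P r \<gamma> Phi \<theta> x s')
                   \<le> sqrt C * norm (bvec P r \<gamma> Phi d \<theta> x + xivec P r \<gamma> Phi \<theta> x s')"
    and p_lower: "norm (\<theta> - \<theta>s) \<le> p (\<theta> - \<theta>s)"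
  shows "p (bvec P r \<gamma> Phi d \<theta> x + xivec P r \<gamma> Phi \<theta> x s')
     \<le> 2 * sqrt C * phimax Phi * (Rmax r + (1 + \<gamma>) * infnorm (Phi *v \<theta>s))
       + 2 * sqrt C * phimax Phi * infnorm (Rvec P r + \<gamma> *\<^sub>R (Pmat P *v Vfun Phi \<theta>s) - Phi *v \<theta>s)
       + 4 * sqrt C * (1 + \<gamma>) * (phimax Phi)\<^sup>2 * p (\<theta> - \<theta>s)"
proof -
  define F where "F = phimax Phi"
  define T where "T = Rmax r + (1 + \<gamma>) * infnorm (Phi *v \<theta>s)"
  have "0 \<le> F" "0 \<le> sqrt C" using \<open>0 \<le> C\<close> unfolding F_def by (simp_all add: phimax_nonneg)
  have "0 \<le> T" unfolding T_def using \<open>0 \<le> \<gamma>\<close>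
    by (intro add_nonneg_nonneg mult_nonneg_nonneg) (simp_all add: Rmax_nonneg infnorm_pos_le)
  have "norm (bvec P r \<gamma> Phi d \<theta> x + xivec P r \<gamma> Phi \<theta> x s') \<le> F * T + 2 * (1 + \<gamma>) * F\<^sup>2 * norm (\<theta> - \<theta>s)"
    unfolding F_def T_def by (rule norm_bvec_plus_xivec_le[OF assms(1-6)])
  then have "p (bvec P r \<gamma> Phi d \<theta> x + xivec P r \<gamma> Phi \<theta> x s')
      \<le> sqrt C * (F * T + 2 * (1 + \<gamma>) * F\<^sup>2 * norm (\<theta> - \<theta>s))"
    using p_upper \<open>0 \<le> sqrt C\<close> by (meson mult_left_mono order_trans)
  also have "\<dots> \<le> sqrt C * (F * T + 2 * (1 + \<gamma>) * F\<^sup>2 * p (\<theta> - \<theta>s))"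
    using p_lower \<open>0 \<le> \<gamma>\<close> \<open>0 \<le> sqrt C\<close> by (intro mult_left_mono add_left_mono) simp_all
  also have "\<dots> \<le> 2 * sqrt C * F * T
       + 2 * sqrt C * F * infnorm (Rvec P r + \<gamma> *\<^sub>R (Pmat P *v Vfun Phi \<theta>s) - Phi *v \<theta>s)
       + 4 * sqrt C * (1 + \<gamma>) * F\<^sup>2 * p (\<theta> - \<theta>s)"
  proof -
    have "0 \<le> p (\<theta> - \<theta>s)" using p_lower norm_ge_zero order_trans by blast
    then have "0 \<le> sqrt C * F * T"
      "0 \<le> sqrt C * F * infnorm (Rvec P r + \<gamma> *\<^sub>R (Pmat P *v Vfun Phi \<theta>s) - Phi *v \<theta>s)"
      "0 \<le> sqrt C * (1 + \<gamma>) * F\<^sup>2 * p (\<theta> - \<theta>s)"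
      using \<open>0 \<le> F\<close> \<open>0 \<le> T\<close> \<open>0 \<le> sqrt C\<close> \<open>0 \<le> \<gamma>\<close>
      by (intro mult_nonneg_nonneg; simp add: infnorm_pos_le)+
    then show ?thesis by (simp add: algebra_simps)
  qed
  finally show ?thesis unfolding F_def T_def .
qed

lemma length_hist [simp]: "length (hist s act j \<omega>) = Suc j"
  by (simp add: hist_def del: upt_Suc)

lemma nth_hist [simp]: "i < Suc j \<Longrightarrow> hist s act j \<omega> ! i = (s i \<omega>, act i \<omega>)"
  by (simp add: hist_def del: upt_Suc)

lemma hist_eq_iff:
  "hist s act j \<omega> = h \<longleftrightarrow> length h = Suc j \<and> (\<forall>i<Suc j. s i \<omega> = fst (h ! i) \<and> act i \<omega> = snd (h ! i))"
  by (auto simp: list_eq_iff_nth_eq prod_eq_iff)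

lemma hist_eqD:
  "hist s act j \<omega> = hist s act j \<omega>' \<Longrightarrow> i \<le> j \<Longrightarrow> s i \<omega> = s i \<omega>' \<and> act i \<omega> = act i \<omega>'"
  using nth_hist[of i j s act \<omega>] nth_hist[of i j s act \<omega>'] by simp

lemma qtheta_eq_if_hist_eq:
  "hist s act j \<omega> = hist s act j \<omega>' \<Longrightarrow> k \<le> j \<Longrightarrow>
   qtheta r \<gamma> \<alpha> Phi \<theta>0 s act k \<omega> = qtheta r \<gamma> \<alpha> Phi \<theta>0 s act k \<omega>'"
proof (induction k)
  case (Suc k)
  then have "qtheta r \<gamma> \<alpha> Phi \<theta>0 s act k \<omega> = qtheta r \<gamma> \<alpha> Phi \<theta>0 s act k \<omega>'" by simp
  moreover have "s k \<omega> = s k \<omega>'" "act k \<omega> = act k \<omega>'" "s (Suc k) \<omega> = s (Suc k) \<omega>'"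
    using hist_eqD[OF Suc.prems(1)] Suc.prems(2) by auto
  ultimately show ?case by (simp add: Let_def)
qed simp

lemma measurable_hist:
  fixes s :: "nat \<Rightarrow> 'w \<Rightarrow> 's::finite" and act :: "nat \<Rightarrow> 'w \<Rightarrow> 'a::finite"
  assumes s_meas: "\<And>i. s i \<in> M \<rightarrow>\<^sub>M count_space UNIV"
    and act_meas: "\<And>i. act i \<in> M \<rightarrow>\<^sub>M count_space UNIV"
  shows "hist s act j \<in> M \<rightarrow>\<^sub>M count_space UNIV"
proof (rule measurable_count_space_eq_countable[THEN iffD2], simp, intro conjI ballI)
  show "hist s act j \<in> space M \<rightarrow> UNIV" by simp
  fix h :: "('s \<times> 'a) list"
  have s_sets: "{\<omega> \<in> space M. s i \<omega> = c} \<in> sets M"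
    and act_sets: "{\<omega> \<in> space M. act i \<omega> = c'} \<in> sets M" for i c c'
    using measurable_sets[OF s_meas, of "{c}"] measurable_sets[OF act_meas, of "{c'}"]
    by (simp_all add: vimage_def Int_def conj_commute)
  have "hist s act j -` {h} \<inter> space M = (if length h = Suc j then
      (\<Inter>i<Suc j. {\<omega> \<in> space M. s i \<omega> = fst (h ! i)} \<inter> {\<omega> \<in> space M. act i \<omega> = snd (h ! i)})
      else {})"
    by (auto simp: hist_eq_iff)
  also have "\<dots> \<in> sets M"
    using s_sets act_sets by auto
  finally show "hist s act j -` {h} \<inter> space M \<in> sets M" .
qed

lemma subalgebra_Filt:
  fixes s :: "nat \<Rightarrow> 'w \<Rightarrow> 's::finite" and act :: "nat \<Rightarrow> 'w \<Rightarrow> 'a::finite"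
  assumes "\<And>i. s i \<in> M \<rightarrow>\<^sub>M count_space UNIV" "\<And>i. act i \<in> M \<rightarrow>\<^sub>M count_space UNIV"
  shows "subalgebra M (Filt M s act j)"
  unfolding subalgebra_def
proof
  show "space (Filt M s act j) = space M" by (simp add: Filt_def)
  show "sets (Filt M s act j) \<subseteq> sets M"
    unfolding Filt_def
    by (subst sets_vimage_algebra2) (auto intro: measurable_sets[OF measurable_hist[OF assms]])
qed

lemma ex_factorization:
  assumes "\<And>x y. H x = H y \<Longrightarrow> f x = f y"
  shows "\<exists>G. f = G \<circ> H"
proof
  show "f = (\<lambda>h. f (SOME x. H x = h)) \<circ> H"
  proof
    fix x
    have "H (SOME y. H y = H x) = H x" by (rule someI) (rule refl)
    then have "f (SOME y. H y = H x) = f x" by (rule assms)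
    then show "f x = ((\<lambda>h. f (SOME x. H x = h)) \<circ> H) x" by simp
  qed
qed

lemma
  fixes s :: "nat \<Rightarrow> 'w \<Rightarrow> 's::finite" and act :: "nat \<Rightarrow> 'w \<Rightarrow> 'a::finite" and f :: "'w \<Rightarrow> real"
  assumes "finite_measure M"
    and s_meas: "\<And>i. s i \<in> M \<rightarrow>\<^sub>M count_space UNIV"
    and act_meas: "\<And>i. act i \<in> M \<rightarrow>\<^sub>M count_space UNIV"
    and det: "\<And>\<omega> \<omega>'. hist s act j \<omega> = hist s act j \<omega>' \<Longrightarrow> f \<omega> = f \<omega>'"
  shows measurable_Filt_if_hist_determined: "f \<in> borel_measurable (Filt M s act j)"
    and integrable_if_hist_determined: "integrable M f"
proof -
  from ex_factorization[OF det] obtain G where fG: "f = G \<circ> hist s act j" ..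
  show F: "f \<in> borel_measurable (Filt M s act j)"
    unfolding fG Filt_def by (rule measurable_comp[OF measurable_vimage_algebra1]) auto
  define B where "B = Max ((\<lambda>h. norm (G h)) ` {h. length h = Suc j})"
  have "norm (f \<omega>) \<le> B" for \<omega>
    unfolding B_def fG by (rule Max_ge) (simp_all add: finite_list_length)
  then have "AE \<omega> in M. norm (f \<omega>) \<le> B" by (intro AE_I2)
  then show "integrable M f"
    using measurable_from_subalg[OF subalgebra_Filt[OF s_meas act_meas] F]
    by (rule finite_measure.integrable_const_bound[OF \<open>finite_measure M\<close>])
qed

lemma (in sigma_finite_subalgebra) real_cond_exp_le_F_meas:
  assumes "AE x in M. f x \<le> g x" "integrable M f" "integrable M g" "g \<in> borel_measurable F"
  shows "AE x in M. real_cond_exp M F f x \<le> g x"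
proof -
  have "AE x in M. real_cond_exp M F f x \<le> real_cond_exp M F g x"
    by (rule real_cond_exp_mono[OF assms(1-3)])
  moreover have "AE x in M. real_cond_exp M F g x = g x"
    by (rule real_cond_exp_F_meas[OF assms(3,4)])
  ultimately show ?thesis by eventually_elim simp
qed

theorem lemma6:
  fixes P :: "'s::finite \<Rightarrow> 'a::finite \<Rightarrow> 's \<Rightarrow> real"
    and r :: "'s \<Rightarrow> 'a \<Rightarrow> 's \<Rightarrow> real"
    and \<gamma> \<alpha> \<epsilon> C :: real
    and Phi :: "real^'n::finite^('s \<times> 'a)"
    and bpol :: "'s \<Rightarrow> 'a \<Rightarrow> real"
    and d :: "'s \<times> 'a \<Rightarrow> real"
    and M :: "'w measure"
    and s :: "nat \<Rightarrow> 'w \<Rightarrow> 's" and act :: "nat \<Rightarrow> 'w \<Rightarrow> 'a"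
    and \<theta>0 \<theta>s :: "real^'n"
    and k :: nat
  assumes P_nonneg: "\<forall>x y z. 0 \<le> P x y z"
    and P_sum: "\<forall>x y. (\<Sum>z\<in>UNIV. P x y z) = 1"
    and gamma: "0 < \<gamma>" "\<gamma> < 1"
    and alpha: "0 < \<alpha>" "\<alpha> < 1"
    and Phi_rank: "rank Phi = CARD('n)"
    and b_nonneg: "\<forall>x y. 0 \<le> bpol x y"
    and b_sum: "\<forall>x. (\<Sum>y\<in>UNIV. bpol x y) = 1"
    and d_pos: "\<forall>x. 0 < d x"
    and d_sum: "(\<Sum>x\<in>UNIV. d x) = 1"
    and d_stat: "\<forall>s' a'. d (s', a') = (\<Sum>x\<in>UNIV. d x * P (fst x) (snd x) s' * bpol s' a')"
    and M: "prob_space M"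
    and s_meas: "\<forall>i. s i \<in> M \<rightarrow>\<^sub>M count_space UNIV"
    and act_meas: "\<forall>i. act i \<in> M \<rightarrow>\<^sub>M count_space UNIV"
    and markov: "\<forall>j h s' a'.
        measure M {\<omega> \<in> space M. hist s act j \<omega> = h \<and> s (Suc j) \<omega> = s' \<and> act (Suc j) \<omega> = a'}
        = measure M {\<omega> \<in> space M. hist s act j \<omega> = h} * P (fst (last h)) (snd (last h)) s' * bpol s' a'"
    and rho: "rho_dir P d \<gamma> \<alpha> Phi < 1"
    and fixpt: "transpose Phi *v (Dmat d *v delta P r \<gamma> Phi \<theta>s) = 0"
    and eps: "0 < \<epsilon>" "rho_dir P d \<gamma> \<alpha> Phi + \<epsilon> < 1"
    and C: "1 \<le> C"
    and C_bounds: "\<forall>x. (norm x)\<^sup>2 \<le> Vinf P d \<gamma> \<alpha> Phi (rho_dir P d \<gamma> \<alpha> Phi + \<epsilon>) x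
                   \<and> Vinf P d \<gamma> \<alpha> Phi (rho_dir P d \<gamma> \<alpha> Phi + \<epsilon>) x \<le> C * (norm x)\<^sup>2"
  shows "AE \<omega> in M.
     real_cond_exp M (Filt M s act k)
       (\<lambda>\<omega>. peps P d \<gamma> \<alpha> Phi (rho_dir P d \<gamma> \<alpha> Phi + \<epsilon>)
              (bvec P r \<gamma> Phi d (qtheta r \<gamma> \<alpha> Phi \<theta>0 s act k \<omega>) (s k \<omega>, act k \<omega>)
               + xivec P r \<gamma> Phi (qtheta r \<gamma> \<alpha> Phi \<theta>0 s act k \<omega>) (s k \<omega>, act k \<omega>) (s (Suc k) \<omega>))) \<omega>
     \<le> 2 * sqrt C * phimax Phi * (Rmax r + (1 + \<gamma>) * infnorm (Phi *v \<theta>s))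
       + 2 * sqrt C * phimax Phi * infnorm (Rvec P r + \<gamma> *\<^sub>R (Pmat P *v Vfun Phi \<theta>s) - Phi *v \<theta>s)
       + 4 * sqrt C * (1 + \<gamma>) * (phimax Phi)\<^sup>2
           * peps P d \<gamma> \<alpha> Phi (rho_dir P d \<gamma> \<alpha> Phi + \<epsilon>) (qtheta r \<gamma> \<alpha> Phi \<theta>0 s act k \<omega> - \<theta>s)"
proof -
  interpret prob_space M by (rule M)
  define \<beta> where "\<beta> = rho_dir P d \<gamma> \<alpha> Phi + \<epsilon>"
  define \<theta> where "\<theta> \<omega> = qtheta r \<gamma> \<alpha> Phi \<theta>0 s act k \<omega>" for \<omega>
  define f where "f \<omega> = peps P d \<gamma> \<alpha> Phi \<beta>
    (bvec P r \<gamma> Phi d (\<theta> \<omega>) (s k \<omega>, act k \<omega>) + xivec P r \<gamma> Phi (\<theta> \<omega>) (s k \<omega>, act k \<omega>) (s (Suc k) \<omega>))"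
    for \<omega>
  define g where "g \<omega> = 2 * sqrt C * phimax Phi * (Rmax r + (1 + \<gamma>) * infnorm (Phi *v \<theta>s))
    + 2 * sqrt C * phimax Phi * infnorm (Rvec P r + \<gamma> *\<^sub>R (Pmat P *v Vfun Phi \<theta>s) - Phi *v \<theta>s)
    + 4 * sqrt C * (1 + \<gamma>) * (phimax Phi)\<^sup>2 * peps P d \<gamma> \<alpha> Phi \<beta> (\<theta> \<omega> - \<theta>s)"
    for \<omega>
  note s_meas' = s_meas[rule_format] and act_meas' = act_meas[rule_format]
  interpret finite_measure_subalgebra M "Filt M s act k"
    by unfold_locales (rule subalgebra_Filt[OF s_meas' act_meas'])
  have f_le_g: "f \<omega> \<le> g \<omega>" for \<omega>
    unfolding f_def g_def using P_nonneg P_sum gamma(1) d_pos d_sum fixpt C C_bounds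
    by (intro equivalent_norm_bvec_plus_xivec_le[where p = "peps P d \<gamma> \<alpha> Phi \<beta>"]
        peps_le_sqrt_norm norm_le_peps) (auto simp: \<beta>_def less_imp_le)
  have f_det: "f \<omega> = f \<omega>'" if "hist s act (Suc k) \<omega> = hist s act (Suc k) \<omega>'" for \<omega> \<omega>'
    using hist_eqD[OF that order_refl] hist_eqD[OF that le_SucI[OF order_refl]]
    by (simp add: f_def \<theta>_def qtheta_eq_if_hist_eq[OF that le_SucI[OF order_refl]])
  have g_det: "g \<omega> = g \<omega>'" if "hist s act k \<omega> = hist s act k \<omega>'" for \<omega> \<omega>'
    by (simp add: g_def \<theta>_def qtheta_eq_if_hist_eq[OF that order_refl])
  note hist_facts = finite_measure_axioms s_meas' act_meas'
  have "AE \<omega> in M. real_cond_exp M (Filt M s act k) f \<omega> \<le> g \<omega>"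
    by (rule real_cond_exp_le_F_meas[OF AE_I2[OF f_le_g]
          integrable_if_hist_determined[OF hist_facts f_det]
          integrable_if_hist_determined[OF hist_facts g_det]
          measurable_Filt_if_hist_determined[OF hist_facts g_det]])
  then show ?thesis unfolding f_def g_def \<theta>_def \<beta>_def .
qed

end
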